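(* Neither the inequality $I(a,b)>S\big(A(a,b),G(a,b)\big)$ nor the inequality $I(a,b)<S\big(A(a,b),G(a,b)\big)$ holds for all distinct positive reals $a,b$. On the other hand, for all distinct positive reals $a,b$, writing $A=A(a,b)$, $G=G(a,b)$, $I=I(a,b)$, $Q=Q(a,b)$, one has $$S(Q,G)>A>I\qquad\text{and}\qquad I(Q,G)<A.$$
   Context: For positive reals $x,y$: $A(x,y)=\frac{x+y}{2}$, $G(x,y)=\sqrt{xy}$, root square mean $Q(x,y)=\sqrt{(x^2+y^2)/2}$, $S(x,y)=(x^xy^y)^{1/(x+y)}$, and for $x\neq y$ the identric mean $I(x,y)=\frac{1}{e}\left(\frac{x^x}{y^y}\right)^{1/(x-y)}$. *)

theory Defs
  imports Complex_Main
begin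

definition AM :: "real \<Rightarrow> real \<Rightarrow> real" where
  "AM x y = (x + y) / 2"

definition GM :: "real \<Rightarrow> real \<Rightarrow> real" where
  "GM x y = sqrt (x * y)"

definition QM :: "real \<Rightarrow> real \<Rightarrow> real" where
  "QM x y = sqrt ((x\<^sup>2 + y\<^sup>2) / 2)"

definition SM :: "real \<Rightarrow> real \<Rightarrow> real" where
  "SM x y = ((x powr x) * (y powr y)) powr (1 / (x + y))"

definition IM :: "real \<Rightarrow> real \<Rightarrow> real" where
  "IM x y = (1 / exp 1) * ((x powr x) / (y powr y)) powr (1 / (x - y))"

end

theory Submission imports Defs begin

text \<open>Taking logarithms, \<open>I(x,y) < A(x,y)\<close> and \<open>S(x,y) > Q(x,y)\<close> become inequalities between
  \<open>x ln x \<plusminus> y ln y\<close> and elementary functions of \<open>x\<close>; for fixed \<open>y\<close> the difference of the two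
  sides vanishes together with its derivative at \<open>x = y\<close> and is strictly convex beyond, so it
  is positive for \<open>x > y\<close>. The remaining claims follow because \<open>Q(Q(a,b), G(a,b)) = A(a,b)\<close>:
  hence \<open>S(Q,G) > Q(Q,G) = A\<close> and \<open>I(Q,G) < A(Q,G) \<le> Q(Q,G) = A\<close>. Neither comparison of \<open>I\<close>
  with \<open>S(A,G)\<close> holds uniformly, as the pairs \<open>(9,1)\<close> and \<open>(2^14,1)\<close> show.\<close>

lemma IM_eq_exp: "0 < x \<Longrightarrow> 0 < y \<Longrightarrow> IM x y = exp ((x * ln x - y * ln y) / (x - y) - 1)"
  by (simp add: IM_def powr_def exp_diff ln_div exp_minus field_simps)

lemma SM_eq_exp: "0 < x \<Longrightarrow> 0 < y \<Longrightarrow> SM x y = exp ((x * ln x + y * ln y) / (x + y))"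
  by (simp add: SM_def powr_def ln_mult field_simps flip: exp_add)

lemma IM_commute: "0 < x \<Longrightarrow> 0 < y \<Longrightarrow> IM x y = IM y x"
  by (simp add: IM_eq_exp) (metis minus_diff_eq minus_divide_divide)

lemma SM_commute: "SM x y = SM y x"
  by (simp add: SM_def add.commute mult.commute)

lemma pos_if_flat_start_and_second_deriv_pos:
  fixes f f' f'' :: "real \<Rightarrow> real"
  assumes "y < x" "f y = 0" "f' y = 0"
    and f': "\<And>t. y \<le> t \<Longrightarrow> t \<le> x \<Longrightarrow> (f has_real_derivative f' t) (at t)"
    and f'': "\<And>t. y \<le> t \<Longrightarrow> t \<le> x \<Longrightarrow> (f' has_real_derivative f'' t) (at t)"
    and f''_pos: "\<And>t. y < t \<Longrightarrow> t < x \<Longrightarrow> f'' t > 0"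
  shows "f x > 0"
proof -
  have f'_pos: "f' z > 0" if "y < z" "z \<le> x" for z
  proof -
    have "\<exists>w>y. w < z \<and> f' z - f' y = (z - y) * f'' w"
      by (rule MVT2) (use that f'' in auto)
    then obtain w where "y < w" "w < z" "f' z - f' y = (z - y) * f'' w" by blast
    then show ?thesis using f''_pos[of w] that assms by simp
  qed
  have "\<exists>z>y. z < x \<and> f x - f y = (x - y) * f' z"
    by (rule MVT2) (use assms f' in auto)
  then obtain z where "y < z" "z < x" "f x - f y = (x - y) * f' z" by blast
  then show ?thesis using f'_pos[of z] assms by simp
qed

lemma x_ln_x_diff_lt:
  fixes x y :: real
  assumes "0 < y" "y < x"
  shows "x * ln x - y * ln y < (x - y) * (ln ((x + y) / 2) + 1)"
proof -
  define f where "f t = (t - y) * (ln ((t + y) / 2) + 1) - t * ln t + y * ln y" for t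
  define f' where "f' t = ln ((t + y) / 2) + (t - y) / (t + y) - ln t" for t
  define f'' where "f'' t = 1 / (t + y) + 2 * y / (t + y)^2 - 1 / t" for t
  have "f x > 0"
  proof (rule pos_if_flat_start_and_second_deriv_pos[of y x f f' f''])
    show "y < x" "f y = 0" "f' y = 0" using assms by (auto simp: f_def f'_def)
    show "(f has_real_derivative f' t) (at t)" if "y \<le> t" "t \<le> x" for t
      unfolding f_def f'_def using that assms
      by (auto intro!: derivative_eq_intros,
            auto simp: divide_simps, auto simp: algebra_simps power2_eq_square)
    show "(f' has_real_derivative f'' t) (at t)" if "y \<le> t" "t \<le> x" for t
      unfolding f'_def f''_def using that assms
      by (auto intro!: derivative_eq_intros,
            auto simp: divide_simps, auto simp: algebra_simps power2_eq_square)
    show "f'' t > 0" if "y < t" "t < x" for t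
    proof -
      have "f'' t = y * (t - y) / (t * (t + y)^2)"
        using that assms unfolding f''_def
        by (simp add: divide_simps) (simp add: algebra_simps power2_eq_square)
      then show ?thesis using that assms by simp
    qed
  qed
  then show ?thesis by (simp add: f_def)
qed

lemma ln_QM_lt_x_ln_x_sum:
  fixes x y :: real
  assumes "0 < y" "y < x"
  shows "(x + y) / 2 * ln ((x^2 + y^2) / 2) < x * ln x + y * ln y"
proof -
  define f where "f t = t * ln t + y * ln y - (t + y) / 2 * ln ((t^2 + y^2) / 2)" for t
  define f' where "f' t = ln t + 1 - ln ((t^2 + y^2) / 2) / 2 - (t + y) * t / (t^2 + y^2)" for t
  define f'' where
    "f'' t = 1 / t - t / (t^2 + y^2) - y * (y^2 + 2 * t * y - t^2) / (t^2 + y^2)^2" for t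
  have "f x > 0"
  proof (rule pos_if_flat_start_and_second_deriv_pos[of y x f f' f''])
    show "y < x" "f y = 0" "f' y = 0"
      using assms by (auto simp: f_def f'_def power2_eq_square ln_mult)
    show "(f has_real_derivative f' t) (at t)" if "y \<le> t" "t \<le> x" for t
    proof -
      have "t > 0" "t * t + y * y > 0" using that assms by (auto intro: add_pos_pos)
      then show ?thesis
        unfolding f_def f'_def
        by (auto intro!: derivative_eq_intros,
            auto simp: divide_simps, auto simp: algebra_simps power2_eq_square)
    qed
    show "(f' has_real_derivative f'' t) (at t)" if "y \<le> t" "t \<le> x" for t
    proof -
      have "t > 0" "t * t + y * y > 0" using that assms by (auto intro: add_pos_pos)
      then show ?thesis
        unfolding f'_def f''_def
        by (auto intro!: derivative_eq_intros,
            auto simp: divide_simps, auto simp: algebra_simps power2_eq_square)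
    qed
    show "f'' t > 0" if "y < t" "t < x" for t
    proof -
      have "t > 0" "t^2 + y^2 > 0" using that assms by (auto intro: add_pos_pos)
      then have "f'' t = y * (t + y) * (t - y)^2 / (t * (t^2 + y^2)^2)"
        unfolding f''_def
        by (simp add: divide_simps) (simp add: algebra_simps power2_eq_square)
      then show ?thesis using that assms by simp
    qed
  qed
  then show ?thesis by (simp add: f_def)
qed

lemma IM_lt_AM:
  assumes "0 < x" "0 < y" "x \<noteq> y"
  shows "IM x y < AM x y"
proof -
  have ordered: "IM x y < AM x y" if "0 < y" "y < x" for x y :: real
  proof -
    have "(x * ln x - y * ln y) / (x - y) - 1 < ln ((x + y) / 2)"
      using x_ln_x_diff_lt[OF that] that by (simp add: divide_simps algebra_simps)
    then have "IM x y < exp (ln ((x + y) / 2))"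
      using that by (simp add: IM_eq_exp del: exp_ln)
    then show ?thesis using that by (simp add: AM_def)
  qed
  show ?thesis
  proof (cases "y < x")
    case True
    then show ?thesis using ordered assms by blast
  next
    case False
    then show ?thesis
      using ordered[of x y] assms IM_commute[of x y] by (simp add: AM_def add.commute)
  qed
qed

lemma QM_lt_SM:
  assumes "0 < x" "0 < y" "x \<noteq> y"
  shows "QM x y < SM x y"
proof -
  have ordered: "QM x y < SM x y" if "0 < y" "y < x" for x y :: real
  proof -
    have "ln ((x^2 + y^2) / 2) / 2 < (x * ln x + y * ln y) / (x + y)"
      using ln_QM_lt_x_ln_x_sum[OF that] that by (simp add: divide_simps algebra_simps)
    then have "exp (ln ((x^2 + y^2) / 2) / 2) < SM x y"
      using that by (simp add: SM_eq_exp del: exp_ln)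
    moreover have "exp (ln ((x^2 + y^2) / 2) / 2) = QM x y"
      using that powr_half_sqrt[of "(x^2 + y^2) / 2"] by (simp add: QM_def powr_def)
    ultimately show ?thesis by simp
  qed
  show ?thesis
  proof (cases "y < x")
    case True
    then show ?thesis using ordered assms by blast
  next
    case False
    then show ?thesis
      using ordered[of x y] assms SM_commute[of x y] by (simp add: QM_def add.commute)
  qed
qed

lemma AM_le_QM: "AM x y \<le> QM x y"
proof -
  have "(AM x y)^2 \<le> (x^2 + y^2) / 2"
    using zero_le_power2[of "x - y"] by (simp add: AM_def power2_eq_square field_simps)
  then show ?thesis unfolding QM_def using real_le_rsqrt by blast
qed

lemma QM_QM_GM_eq_AM:
  assumes "0 < a" "0 < b"
  shows "QM (QM a b) (GM a b) = AM a b"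
proof -
  have "((QM a b)^2 + (GM a b)^2) / 2 = (AM a b)^2"
    using assms by (simp add: QM_def GM_def AM_def add_nonneg_nonneg power2_eq_square field_simps)
  then show ?thesis using assms by (simp add: QM_def AM_def)
qed

lemma QM_neq_GM:
  assumes "0 < a" "0 < b" "a \<noteq> b"
  shows "QM a b \<noteq> GM a b"
proof
  assume "QM a b = GM a b"
  then have "(QM a b)^2 - (GM a b)^2 = 0" by simp
  moreover have "(QM a b)^2 - (GM a b)^2 = (a - b)^2 / 2"
    using assms by (simp add: QM_def GM_def add_nonneg_nonneg power2_eq_square algebra_simps)
  ultimately show False using assms by simp
qed

text \<open>Here \<open>A = 5\<close>, \<open>G = 3\<close>, and \<open>I(9,1) > S(5,3)\<close> amounts to \<open>15 ln 3 - 5 ln 5 > 8\<close>.\<close>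
lemma SM_AM_GM_lt_IM_9_1: "SM (AM 9 1) (GM 9 1) < IM 9 1"
proof -
  have "exp (1/16) \<le> (273/256::real)"
    using exp_bound[of "1/16"] by (simp add: power2_eq_square)
  then have "exp (8::real) \<le> (273/256) ^ 128"
    using exp_of_nat_mult[of 128 "1/16::real"] power_mono[of "exp (1/16)" "273/256::real" 128]
    by simp
  also have "\<dots> < (3::real)^15 / 5^5" by (simp add: power_divide)
  finally have "8 < ln ((3::real)^15 / 5^5)"
    by (metis exp_less_cancel_iff exp_ln divide_pos_pos zero_less_power zero_less_numeral)
  then have "8 < 15 * ln (3::real) - 5 * ln 5"
    using ln_realpow[of "3::real" 15] ln_realpow[of "5::real" 5] by (simp add: ln_div)
  moreover have "ln (9::real) = 2 * ln 3"
    using ln_realpow[of 3 2] by simp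
  ultimately have "(5 * ln 5 + 3 * ln 3) / (5 + 3) < (9 * ln 9 - 1 * ln 1) / (9 - 1) - (1::real)"
    by simp
  moreover have "AM 9 1 = 5" "GM 9 1 = 3" by (simp_all add: AM_def GM_def)
  ultimately show ?thesis by (simp only:) (simp add: IM_eq_exp SM_eq_exp del: ln_one)
qed

text \<open>Here \<open>A = 16385/2\<close> and \<open>G = 2^7\<close>; the crude bound \<open>ln 2 \<le> 5/6\<close> suffices.\<close>
lemma IM_lt_SM_AM_GM_16384_1: "IM 16384 1 < SM (AM 16384 1) (GM 16384 1)"
proof -
  define L where "L = ln (2::real)"
  have "L = ln (4/3) + ln (3/2)" unfolding L_def using ln_mult[of "4/3" "3/2::real"] by simp
  then have L_le: "L \<le> 5/6"
    using ln_le_minus_one[of "4/3::real"] ln_le_minus_one[of "3/2::real"] by simp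
  have L_pos: "L > 0" unfolding L_def by simp
  have ln_2_pow: "ln (2 ^ n :: real) = n * L" for n
    unfolding L_def by (simp add: ln_realpow)
  have "ln (2 ^ 13 :: real) < ln (16385/2)" by simp
  then have "13 * L < ln (16385/2::real)"
    unfolding ln_2_pow by simp
  then have "(16384 * ln 16384 - 1 * ln 1) / (16384 - 1) - 1 <
        ((16385/2) * ln (16385/2) + 128 * ln 128) / (16385/2 + (128::real))"
    using L_le L_pos ln_2_pow[of 14] ln_2_pow[of 7] by (simp add: divide_simps)
  moreover have "AM 16384 1 = 16385/2" "GM 16384 1 = 128"
    by (simp_all add: AM_def GM_def real_sqrt_unique)
  ultimately show ?thesis by (simp only:) (simp add: IM_eq_exp SM_eq_exp del: ln_one)
qed

theorem theorem4:
  shows "\<not> (\<forall>a b::real. 0 < a \<longrightarrow> 0 < b \<longrightarrow> a \<noteq> b \<longrightarrow>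
              IM a b > SM (AM a b) (GM a b)) \<and>
         \<not> (\<forall>a b::real. 0 < a \<longrightarrow> 0 < b \<longrightarrow> a \<noteq> b \<longrightarrow>
              IM a b < SM (AM a b) (GM a b)) \<and>
         (\<forall>a b::real. 0 < a \<longrightarrow> 0 < b \<longrightarrow> a \<noteq> b \<longrightarrow>
              SM (QM a b) (GM a b) > AM a b \<and> AM a b > IM a b \<and>
              IM (QM a b) (GM a b) < AM a b)"
proof (intro conjI allI impI)
  show "\<not> (\<forall>a b::real. 0 < a \<longrightarrow> 0 < b \<longrightarrow> a \<noteq> b \<longrightarrow> IM a b > SM (AM a b) (GM a b))"
  proof
    assume "\<forall>a b::real. 0 < a \<longrightarrow> 0 < b \<longrightarrow> a \<noteq> b \<longrightarrow> IM a b > SM (AM a b) (GM a b)"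
    from this[rule_format, of 16384 1] show False using IM_lt_SM_AM_GM_16384_1 by simp
  qed
  show "\<not> (\<forall>a b::real. 0 < a \<longrightarrow> 0 < b \<longrightarrow> a \<noteq> b \<longrightarrow> IM a b < SM (AM a b) (GM a b))"
  proof
    assume "\<forall>a b::real. 0 < a \<longrightarrow> 0 < b \<longrightarrow> a \<noteq> b \<longrightarrow> IM a b < SM (AM a b) (GM a b)"
    from this[rule_format, of 9 1] show False using SM_AM_GM_lt_IM_9_1 by simp
  qed
  fix a b :: real
  assume ab: "0 < a" "0 < b" "a \<noteq> b"
  have Q_pos: "QM a b > 0" using ab by (simp add: QM_def add_pos_pos)
  have G_pos: "GM a b > 0" using ab by (simp add: GM_def)
  note QG = Q_pos G_pos QM_neq_GM[OF ab]
  show "AM a b > IM a b" using IM_lt_AM[OF ab] .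
  show "SM (QM a b) (GM a b) > AM a b"
    using QM_lt_SM[OF QG] QM_QM_GM_eq_AM[OF ab(1,2)] by simp
  show "IM (QM a b) (GM a b) < AM a b"
    using IM_lt_AM[OF QG] AM_le_QM[of "QM a b" "GM a b"] QM_QM_GM_eq_AM[OF ab(1,2)] by simp
qed

end
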